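(* Let $n,m>3$ be integers and let $\psi$ be an automorphism of $\mathcal{CSR}(m,n)$. For every vertex $\xi$ of $\mathcal{CSR}(m,n)$ and every $a\neq b$ in $[m]$, there exist a vertex $\varsigma$ of $\mathcal{CSR}(m,n)$ and $p,q\in[m]$ (with $p\neq q$) such that $\psi(\xi+S_{ab})=\varsigma+S_{pq}$.
   Context: For positive integers $m,n$, the cyclic simplicial rook graph $\mathcal{CSR}(m,n)$ is the graph whose vertices are the vectors $(a_1,\dots,a_m)\in\mathbb{Z}_n^m$ with $a_1+\cdots+a_m\equiv 0 \pmod n$, two vertices being adjacent if and only if their vectors differ in exactly two coordinates. $[m]=\{1,\dots,m\}$; $e_i\in\mathbb{Z}_n^m$ is the vector with $1$ in coordinate $i$ and $0$ elsewhere; for distinct $a,b\in[m]$, $S_{ab}=\{\alpha(e_a-e_b)\mid \alpha\in\mathbb{Z}_n\}$; and $x+A=\{x+y\mid y\in A\}$. *)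

theory Defs
  imports Main
begin

text \<open>Vectors of Z_n^m are represented as functions nat => int, with coordinates
indexed by [m] = {1..m}, entries in {0..<n} (canonical representatives), and
value 0 outside [m].\<close>

definition zvec :: "nat \<Rightarrow> nat \<Rightarrow> (nat \<Rightarrow> int) set" where
  "zvec m n = {a. (\<forall>i\<in>{1..m}. a i \<in> {0..<int n}) \<and> (\<forall>i. i \<notin> {1..m} \<longrightarrow> a i = 0)}"

definition csr_verts :: "nat \<Rightarrow> nat \<Rightarrow> (nat \<Rightarrow> int) set" where
  "csr_verts m n = {a \<in> zvec m n. (\<Sum>i=1..m. a i) mod int n = 0}"

definition csr_adj :: "nat \<Rightarrow> (nat \<Rightarrow> int) \<Rightarrow> (nat \<Rightarrow> int) \<Rightarrow> bool" where
  "csr_adj m x y \<longleftrightarrow> card {i\<in>{1..m}. x i \<noteq> y i} = 2"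

definition csr_aut :: "nat \<Rightarrow> nat \<Rightarrow> ((nat \<Rightarrow> int) \<Rightarrow> (nat \<Rightarrow> int)) \<Rightarrow> bool" where
  "csr_aut m n \<psi> \<longleftrightarrow> bij_betw \<psi> (csr_verts m n) (csr_verts m n) \<and>
     (\<forall>x\<in>csr_verts m n. \<forall>y\<in>csr_verts m n. csr_adj m x y \<longleftrightarrow> csr_adj m (\<psi> x) (\<psi> y))"

definition vadd :: "nat \<Rightarrow> (nat \<Rightarrow> int) \<Rightarrow> (nat \<Rightarrow> int) \<Rightarrow> (nat \<Rightarrow> int)" where
  "vadd n x y = (\<lambda>i. (x i + y i) mod int n)"

definition unitv :: "nat \<Rightarrow> nat \<Rightarrow> int" where
  "unitv a = (\<lambda>i. if i = a then 1 else 0)"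

definition S_line :: "nat \<Rightarrow> nat \<Rightarrow> nat \<Rightarrow> (nat \<Rightarrow> int) set" where
  "S_line n a b = {(\<lambda>i. (\<alpha> * (unitv a i - unitv b i)) mod int n) | \<alpha>. \<alpha> \<in> {0..<int n}}"

definition vtrans :: "nat \<Rightarrow> (nat \<Rightarrow> int) \<Rightarrow> (nat \<Rightarrow> int) set \<Rightarrow> (nat \<Rightarrow> int) set" where
  "vtrans n x A = {vadd n x y | y. y \<in> A}"

end

theory Submission
  imports Defs
begin

(* The translate xi + S_ab is the set of vertices that differ from xi at most in the coordinates
   a and b.  Call a clique closed if it has at least three vertices and contains every vertex
   adjacent to three of its members.  Such lines are closed cliques (this needs n >= 3), and a
   closed clique through x is either a line through x or a star at x: for some coordinate a it
   contains, for every d <> a, a vertex differing from x exactly in a and d.  A star through x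
   shares a vertex other than x, or an edge, with every other closed clique through x.  The two
   lines through xi in disjoint coordinate pairs {a,b} and {c,d} (which exist since m >= 4) meet
   only in xi and have no edge between them.  Automorphisms preserve all of this, so the image of
   a line is a closed clique that is not a star, hence a line. *)

definition diff_coords :: "nat \<Rightarrow> (nat \<Rightarrow> int) \<Rightarrow> (nat \<Rightarrow> int) \<Rightarrow> nat set" where
  "diff_coords m x y = {i\<in>{1..m}. x i \<noteq> y i}"

lemma csr_adj_iff_card_diff_coords: "csr_adj m x y \<longleftrightarrow> card (diff_coords m x y) = 2"
  by (simp add: csr_adj_def diff_coords_def)

lemma diff_coords_commute: "diff_coords m x y = diff_coords m y x"
  by (auto simp: diff_coords_def)

lemma csr_adj_commute: "csr_adj m x y \<longleftrightarrow> csr_adj m y x"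
  by (simp add: csr_adj_iff_card_diff_coords diff_coords_commute)

lemma diff_coords_subset: "diff_coords m x y \<subseteq> {1..m}"
  by (auto simp: diff_coords_def)

lemma diff_coords_self [simp]: "diff_coords m x x = {}"
  by (simp add: diff_coords_def)

lemma diff_coords_triangle: "diff_coords m y z \<subseteq> diff_coords m x y \<union> diff_coords m x z"
  by (auto simp: diff_coords_def)

lemma diff_coords_Diff_subset: "diff_coords m x y - diff_coords m x z \<subseteq> diff_coords m y z"
  by (auto simp: diff_coords_def)

lemma csr_verts_range: "x \<in> csr_verts m n \<Longrightarrow> i \<in> {1..m} \<Longrightarrow> 0 \<le> x i \<and> x i < int n"
  by (auto simp: csr_verts_def zvec_def)

lemma csr_verts_outside: "x \<in> csr_verts m n \<Longrightarrow> i \<notin> {1..m} \<Longrightarrow> x i = 0"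
  by (auto simp: csr_verts_def zvec_def)

lemma csr_verts_mod: "x \<in> csr_verts m n \<Longrightarrow> x i mod int n = x i"
  by (cases "i \<in> {1..m}") (auto dest: csr_verts_range csr_verts_outside)

lemma csr_verts_in_diff_coords_iff:
  "x \<in> csr_verts m n \<Longrightarrow> y \<in> csr_verts m n \<Longrightarrow> i \<in> diff_coords m x y \<longleftrightarrow> x i \<noteq> y i"
  by (cases "i \<in> {1..m}") (auto simp: diff_coords_def csr_verts_outside)

lemma csr_verts_eqI: "x \<in> csr_verts m n \<Longrightarrow> y \<in> csr_verts m n \<Longrightarrow> diff_coords m x y = {} \<Longrightarrow> x = y"
  by (rule ext) (metis csr_verts_in_diff_coords_iff empty_iff)

lemma csr_verts_coord_eq_if_dvd:
  "x \<in> csr_verts m n \<Longrightarrow> y \<in> csr_verts m n \<Longrightarrow> int n dvd (y i - x i) \<Longrightarrow> y i = x i"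
  by (metis csr_verts_mod mod_eq_dvd_iff)

lemma sum_eq_sum_plus_sum_diff:
  fixes f g :: "'a \<Rightarrow> 'b::ab_group_add"
  assumes "finite A" "D \<subseteq> A" "\<forall>k\<in>A - D. f k = g k"
  shows "sum f A = sum g A + (\<Sum>k\<in>D. f k - g k)"
proof -
  have "sum f A - sum g A = (\<Sum>k\<in>A. f k - g k)" by (simp add: sum_subtractf)
  also have "\<dots> = (\<Sum>k\<in>D. f k - g k)" using assms by (intro sum.mono_neutral_right) auto
  finally show ?thesis by (simp add: algebra_simps)
qed

lemma csr_verts_dvd_sum_diff:
  assumes x: "x \<in> csr_verts m n" and y: "y \<in> csr_verts m n"
  shows "int n dvd (\<Sum>i\<in>diff_coords m x y. y i - x i)"
proof -
  have "(\<Sum>i=1..m. y i) = (\<Sum>i=1..m. x i) + (\<Sum>i\<in>diff_coords m x y. y i - x i)"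
    by (rule sum_eq_sum_plus_sum_diff) (auto simp: diff_coords_def)
  moreover have "int n dvd (\<Sum>i=1..m. x i)" "int n dvd (\<Sum>i=1..m. y i)"
    using x y by (auto simp: csr_verts_def)
  ultimately show ?thesis by (metis dvd_add_right_iff)
qed

lemma diff_coords_not_singleton:
  assumes x: "x \<in> csr_verts m n" and y: "y \<in> csr_verts m n"
  shows "diff_coords m x y \<noteq> {i}"
proof
  assume d: "diff_coords m x y = {i}"
  then have "int n dvd (y i - x i)" using csr_verts_dvd_sum_diff[OF x y] by simp
  then have "y i = x i" by (rule csr_verts_coord_eq_if_dvd[OF x y])
  then show False using d by (auto simp: diff_coords_def)
qed

lemma diff_coords_eq_pair:
  assumes "x \<in> csr_verts m n" "y \<in> csr_verts m n" "x \<noteq> y"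
    and "diff_coords m x y \<subseteq> {p,q}" "p \<noteq> q"
  shows "diff_coords m x y = {p,q}"
  using assms csr_verts_eqI diff_coords_not_singleton by (metis subset_insert_iff subset_singletonD insert_Diff)

(* Set coordinate i to v and compensate in coordinate j, keeping the coordinate sum mod n. *)
definition upd_comp :: "nat \<Rightarrow> (nat \<Rightarrow> int) \<Rightarrow> nat \<Rightarrow> int \<Rightarrow> nat \<Rightarrow> nat \<Rightarrow> int" where
  "upd_comp n x i v j = (\<lambda>k. if k = i then v else if k = j then (x j + x i - v) mod int n else x k)"

lemma upd_comp_in_csr_verts:
  assumes x: "x \<in> csr_verts m n" and ij: "i \<in> {1..m}" "j \<in> {1..m}" "i \<noteq> j"
    and v: "0 \<le> v" "v < int n"
  shows "upd_comp n x i v j \<in> csr_verts m n"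
proof -
  let ?w = "upd_comp n x i v j"
  have "?w \<in> zvec m n"
    using csr_verts_range[OF x] csr_verts_outside[OF x] ij v by (auto simp: zvec_def upd_comp_def)
  moreover have "(\<Sum>k=1..m. ?w k) = (\<Sum>k=1..m. x k) + (\<Sum>k\<in>{i,j}. ?w k - x k)"
    using ij by (intro sum_eq_sum_plus_sum_diff) (auto simp: upd_comp_def)
  moreover have "(\<Sum>k\<in>{i,j}. ?w k - x k) = (x j + x i - v) mod int n - (x j + x i - v)"
    using ij by (simp add: upd_comp_def)
  moreover have "int n dvd ((x j + x i - v) mod int n - (x j + x i - v))"
    by (metis mod_eq_dvd_iff mod_mod_trivial)
  ultimately show ?thesis
    using x by (auto simp: csr_verts_def dvd_add_right_iff simp flip: dvd_eq_mod_eq_0)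
qed

lemma upd_comp_at [simp]: "upd_comp n x i v j i = v"
  by (simp add: upd_comp_def)

lemma diff_coords_upd_comp_subset: "diff_coords m x (upd_comp n x i v j) \<subseteq> {i,j}"
  by (auto simp: diff_coords_def upd_comp_def)

lemma diff_coords_upd_comp:
  assumes x: "x \<in> csr_verts m n" and ij: "i \<in> {1..m}" "j \<in> {1..m}" "i \<noteq> j"
    and v: "0 \<le> v" "v < int n" "v \<noteq> x i"
  shows "diff_coords m x (upd_comp n x i v j) = {i,j}"
proof (rule diff_coords_eq_pair[OF x _ _ diff_coords_upd_comp_subset \<open>i \<noteq> j\<close>])
  show "upd_comp n x i v j \<in> csr_verts m n" by (rule upd_comp_in_csr_verts[OF x ij v(1,2)])
  show "x \<noteq> upd_comp n x i v j" using v(3) upd_comp_at[of n x i v j] by force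
qed

definition csr_line :: "nat \<Rightarrow> nat \<Rightarrow> (nat \<Rightarrow> int) \<Rightarrow> nat \<Rightarrow> nat \<Rightarrow> (nat \<Rightarrow> int) set" where
  "csr_line m n x p q = {y\<in>csr_verts m n. diff_coords m x y \<subseteq> {p,q}}"

lemma self_in_csr_line: "x \<in> csr_verts m n \<Longrightarrow> x \<in> csr_line m n x p q"
  by (simp add: csr_line_def)

lemma upd_comp_in_csr_line:
  "x \<in> csr_verts m n \<Longrightarrow> p \<in> {1..m} \<Longrightarrow> q \<in> {1..m} \<Longrightarrow> p \<noteq> q \<Longrightarrow> 0 \<le> v \<Longrightarrow> v < int n \<Longrightarrow>
    upd_comp n x p v q \<in> csr_line m n x p q"
  by (simp add: csr_line_def upd_comp_in_csr_verts diff_coords_upd_comp_subset)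

lemma diff_coords_csr_line:
  assumes "u \<in> csr_line m n x p q" "v \<in> csr_line m n x p q" "u \<noteq> v" "p \<noteq> q"
  shows "diff_coords m u v = {p,q}"
  using assms diff_coords_triangle[of m u v x]
  by (intro diff_coords_eq_pair) (auto simp: csr_line_def diff_coords_commute)

lemma csr_line_coords_neq:
  assumes "u \<in> csr_line m n x p q" "v \<in> csr_line m n x p q" "u \<noteq> v" "p \<noteq> q"
  shows "u p \<noteq> v p" "u q \<noteq> v q"
  using diff_coords_csr_line[OF assms] by (auto simp: diff_coords_def)

lemma csr_line_adj:
  "u \<in> csr_line m n x p q \<Longrightarrow> v \<in> csr_line m n x p q \<Longrightarrow> u \<noteq> v \<Longrightarrow> p \<noteq> q \<Longrightarrow> csr_adj m u v"
  by (simp add: csr_adj_iff_card_diff_coords diff_coords_csr_line)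

lemma csr_line_eq_upd_comp:
  assumes x: "x \<in> csr_verts m n" and y: "y \<in> csr_line m n x p q" and pq: "p \<noteq> q"
  shows "y = upd_comp n x p (y p) q"
proof
  have yV: "y \<in> csr_verts m n" and d: "diff_coords m x y \<subseteq> {p,q}" using y by (auto simp: csr_line_def)
  have agree: "y k = x k" if "k \<noteq> p" "k \<noteq> q" for k
  proof -
    have "k \<notin> diff_coords m x y" using that d by blast
    then show ?thesis using csr_verts_in_diff_coords_iff[OF x yV] by simp
  qed
  have "int n dvd (\<Sum>i\<in>diff_coords m x y. y i - x i)" by (rule csr_verts_dvd_sum_diff[OF x yV])
  moreover have "(\<Sum>i\<in>diff_coords m x y. y i - x i) = (\<Sum>i\<in>{p,q}. y i - x i)"
  proof (rule sum.mono_neutral_left)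
    show "\<forall>i\<in>{p,q} - diff_coords m x y. y i - x i = 0"
      using csr_verts_in_diff_coords_iff[OF x yV] by simp
  qed (use d in auto)
  ultimately have "int n dvd ((y p - x p) + (y q - x q))" using pq by simp
  then have "int n dvd (y q - (x q + x p - y p))" by (simp add: algebra_simps)
  then have yq: "y q = (x q + x p - y p) mod int n"
    using csr_verts_mod[OF yV, of q] by (metis mod_eq_dvd_iff)
  fix k
  show "y k = upd_comp n x p (y p) q k"
    using agree yq by (auto simp: upd_comp_def)
qed

lemma vadd_S_line_elem:
  assumes x: "x \<in> csr_verts m n" and ab: "a \<noteq> b"
  shows "vadd n x (\<lambda>i. (\<alpha> * (unitv a i - unitv b i)) mod int n) = upd_comp n x a ((x a + \<alpha>) mod int n) b"
proof
  fix i
  show "vadd n x (\<lambda>i. (\<alpha> * (unitv a i - unitv b i)) mod int n) i = upd_comp n x a ((x a + \<alpha>) mod int n) b i"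
  proof -
    consider "i = a" | "i = b" | "i \<noteq> a" "i \<noteq> b" by blast
    then show ?thesis
    proof cases
      case 3
      then show ?thesis by (simp add: vadd_def unitv_def upd_comp_def csr_verts_mod[OF x])
    qed (use ab in \<open>simp_all add: vadd_def unitv_def upd_comp_def mod_simps\<close>)
  qed
qed

lemma vtrans_S_line:
  assumes x: "x \<in> csr_verts m n" and ab: "a \<in> {1..m}" "b \<in> {1..m}" "a \<noteq> b" and n: "n > 0"
  shows "vtrans n x (S_line n a b) = csr_line m n x a b"
proof -
  have "vtrans n x (S_line n a b) = (\<lambda>\<alpha>. vadd n x (\<lambda>i. (\<alpha> * (unitv a i - unitv b i)) mod int n)) ` {0..<int n}"
    unfolding vtrans_def S_line_def by blast
  also have "\<dots> = (\<lambda>\<alpha>. upd_comp n x a ((x a + \<alpha>) mod int n) b) ` {0..<int n}"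
    by (simp only: vadd_S_line_elem[OF x ab(3)])
  also have "\<dots> = csr_line m n x a b"
  proof
    show "(\<lambda>\<alpha>. upd_comp n x a ((x a + \<alpha>) mod int n) b) ` {0..<int n} \<subseteq> csr_line m n x a b"
      using upd_comp_in_csr_line[OF x ab] n by auto
    show "csr_line m n x a b \<subseteq> (\<lambda>\<alpha>. upd_comp n x a ((x a + \<alpha>) mod int n) b) ` {0..<int n}"
    proof
      fix y assume y: "y \<in> csr_line m n x a b"
      then have "y a = (x a + (y a - x a) mod int n) mod int n"
        using csr_verts_mod[of y m n a] by (simp add: mod_add_right_eq csr_line_def)
      then have "y = upd_comp n x a ((x a + (y a - x a) mod int n) mod int n) b"
        using csr_line_eq_upd_comp[OF x y ab(3)] by simp
      moreover have "(y a - x a) mod int n \<in> {0..<int n}" using n by simp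
      ultimately show "y \<in> (\<lambda>\<alpha>. upd_comp n x a ((x a + \<alpha>) mod int n) b) ` {0..<int n}" by blast
    qed
  qed
  finally show ?thesis .
qed

definition closed_clique :: "nat \<Rightarrow> nat \<Rightarrow> (nat \<Rightarrow> int) set \<Rightarrow> bool" where
  "closed_clique m n C \<longleftrightarrow> C \<subseteq> csr_verts m n \<and>
     (\<forall>u\<in>C. \<forall>v\<in>C. u \<noteq> v \<longrightarrow> csr_adj m u v) \<and>
     (\<forall>v\<in>csr_verts m n. \<forall>y1\<in>C. \<forall>y2\<in>C. \<forall>y3\<in>C. y1 \<noteq> y2 \<and> y1 \<noteq> y3 \<and> y2 \<noteq> y3 \<and>
        csr_adj m v y1 \<and> csr_adj m v y2 \<and> csr_adj m v y3 \<longrightarrow> v \<in> C) \<and>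
     (\<exists>y1\<in>C. \<exists>y2\<in>C. \<exists>y3\<in>C. y1 \<noteq> y2 \<and> y1 \<noteq> y3 \<and> y2 \<noteq> y3)"

lemma closed_clique_subset: "closed_clique m n C \<Longrightarrow> C \<subseteq> csr_verts m n"
  by (simp add: closed_clique_def)

lemma closed_clique_adj: "closed_clique m n C \<Longrightarrow> u \<in> C \<Longrightarrow> v \<in> C \<Longrightarrow> u \<noteq> v \<Longrightarrow> csr_adj m u v"
  by (simp add: closed_clique_def)

lemma closed_clique_common_neighbour:
  "closed_clique m n C \<Longrightarrow> v \<in> csr_verts m n \<Longrightarrow> y1 \<in> C \<Longrightarrow> y2 \<in> C \<Longrightarrow> y3 \<in> C \<Longrightarrow>
    y1 \<noteq> y2 \<Longrightarrow> y1 \<noteq> y3 \<Longrightarrow> y2 \<noteq> y3 \<Longrightarrow> csr_adj m v y1 \<Longrightarrow> csr_adj m v y2 \<Longrightarrow> csr_adj m v y3 \<Longrightarrow>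
    v \<in> C"
  unfolding closed_clique_def by blast

lemma closed_clique_three:
  assumes "closed_clique m n C"
  obtains y1 y2 y3 where "y1 \<in> C" "y2 \<in> C" "y3 \<in> C" "y1 \<noteq> y2" "y1 \<noteq> y3" "y2 \<noteq> y3"
  using assms by (auto simp: closed_clique_def)

text \<open>Outside \<open>{p,q}\<close> all points of the line agree, so a vertex off the line differs from each
  of the three points in a coordinate \<open>r \<notin> {p,q}\<close>; adjacency then forces it to agree with each
  point at \<open>p\<close> or at \<open>q\<close>, while the three points have pairwise distinct \<open>p\<close>- and \<open>q\<close>-coordinates.\<close>

lemma csr_line_common_neighbour:
  assumes pq: "p \<noteq> q"
    and y: "y1 \<in> csr_line m n x p q" "y2 \<in> csr_line m n x p q" "y3 \<in> csr_line m n x p q"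
    and distinct: "y1 \<noteq> y2" "y1 \<noteq> y3" "y2 \<noteq> y3"
    and v: "v \<in> csr_verts m n" and adj: "csr_adj m v y1" "csr_adj m v y2" "csr_adj m v y3"
  shows "v \<in> csr_line m n x p q"
proof (rule ccontr)
  assume "v \<notin> csr_line m n x p q"
  then obtain r where r: "r \<in> diff_coords m x v" "r \<notin> {p,q}"
    using v by (auto simp: csr_line_def)
  have agree: "v p = y p \<or> v q = y q" if yl: "y \<in> csr_line m n x p q" and yv: "csr_adj m v y" for y
  proof (rule ccontr)
    assume neq: "\<not> (v p = y p \<or> v q = y q)"
    have yV: "y \<in> csr_verts m n" and "diff_coords m x y \<subseteq> {p,q}" using yl by (auto simp: csr_line_def)
    then have "r \<notin> diff_coords m x y" using r by blast
    then have "r \<in> diff_coords m v y" using r(1) by (auto simp: diff_coords_def)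
    then have "{r,p,q} \<subseteq> diff_coords m v y"
      using neq csr_verts_in_diff_coords_iff[OF v yV] by auto
    then have "card {r,p,q} \<le> card (diff_coords m v y)"
      by (intro card_mono) (auto intro: finite_subset[OF diff_coords_subset])
    then show False using yv r pq by (simp add: csr_adj_iff_card_diff_coords)
  qed
  show False
    using agree[OF y(1) adj(1)] agree[OF y(2) adj(2)] agree[OF y(3) adj(3)]
      csr_line_coords_neq[OF y(1,2) distinct(1) pq] csr_line_coords_neq[OF y(1,3) distinct(2) pq]
      csr_line_coords_neq[OF y(2,3) distinct(3) pq]
    by metis
qed

lemma closed_clique_csr_line:
  assumes x: "x \<in> csr_verts m n" and pq: "p \<in> {1..m}" "q \<in> {1..m}" "p \<noteq> q" and n: "n \<ge> 3"
  shows "closed_clique m n (csr_line m n x p q)"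
proof -
  let ?y = "\<lambda>v. upd_comp n x p v q"
  have in_line: "?y 0 \<in> csr_line m n x p q" "?y 1 \<in> csr_line m n x p q" "?y 2 \<in> csr_line m n x p q"
    using upd_comp_in_csr_line[OF x pq] n by auto
  have distinct: "?y 0 \<noteq> ?y 1" "?y 0 \<noteq> ?y 2" "?y 1 \<noteq> ?y 2"
    by (auto dest!: fun_cong[where x = p])
  show ?thesis
    unfolding closed_clique_def
  proof (intro conjI)
    show "csr_line m n x p q \<subseteq> csr_verts m n" by (auto simp: csr_line_def)
    show "\<forall>u\<in>csr_line m n x p q. \<forall>v\<in>csr_line m n x p q. u \<noteq> v \<longrightarrow> csr_adj m u v"
      using csr_line_adj[OF _ _ _ pq(3)] by blast
    show "\<forall>v\<in>csr_verts m n. \<forall>y1\<in>csr_line m n x p q. \<forall>y2\<in>csr_line m n x p q. \<forall>y3\<in>csr_line m n x p q.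
        y1 \<noteq> y2 \<and> y1 \<noteq> y3 \<and> y2 \<noteq> y3 \<and> csr_adj m v y1 \<and> csr_adj m v y2 \<and> csr_adj m v y3 \<longrightarrow>
        v \<in> csr_line m n x p q"
      using csr_line_common_neighbour[OF pq(3)] by blast
    show "\<exists>y1\<in>csr_line m n x p q. \<exists>y2\<in>csr_line m n x p q. \<exists>y3\<in>csr_line m n x p q.
        y1 \<noteq> y2 \<and> y1 \<noteq> y3 \<and> y2 \<noteq> y3"
      using in_line distinct by blast
  qed
qed

lemma closed_clique_subset_csr_line_eq:
  assumes C: "closed_clique m n C" and pq: "p \<noteq> q" and sub: "C \<subseteq> csr_line m n x p q"
  shows "C = csr_line m n x p q"
proof
  show "csr_line m n x p q \<subseteq> C"
  proof
    fix v assume v: "v \<in> csr_line m n x p q"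
    obtain y1 y2 y3 where y: "y1 \<in> C" "y2 \<in> C" "y3 \<in> C" "y1 \<noteq> y2" "y1 \<noteq> y3" "y2 \<noteq> y3"
      using closed_clique_three[OF C] .
    show "v \<in> C"
    proof (cases "v \<in> {y1,y2,y3}")
      case False
      then have "csr_adj m v y1" "csr_adj m v y2" "csr_adj m v y3"
        using csr_line_adj[OF v _ _ pq] y sub by auto
      moreover have "v \<in> csr_verts m n" using v by (simp add: csr_line_def)
      ultimately show ?thesis using closed_clique_common_neighbour[OF C] y by blast
    qed (use y in auto)
  qed
qed (rule sub)

lemma csr_aut_adj:
  "csr_aut m n \<psi> \<Longrightarrow> x \<in> csr_verts m n \<Longrightarrow> y \<in> csr_verts m n \<Longrightarrow> csr_adj m (\<psi> x) (\<psi> y) \<longleftrightarrow> csr_adj m x y"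
  by (simp add: csr_aut_def)

lemma csr_aut_inj_on: "csr_aut m n \<psi> \<Longrightarrow> inj_on \<psi> (csr_verts m n)"
  by (simp add: csr_aut_def bij_betw_def)

lemma csr_aut_image: "csr_aut m n \<psi> \<Longrightarrow> \<psi> ` csr_verts m n = csr_verts m n"
  by (simp add: csr_aut_def bij_betw_def)

lemma closed_clique_image:
  assumes aut: "csr_aut m n \<psi>" and C: "closed_clique m n C"
  shows "closed_clique m n (\<psi> ` C)"
proof -
  let ?V = "csr_verts m n"
  have CV: "C \<subseteq> ?V" by (rule closed_clique_subset[OF C])
  have inj: "inj_on \<psi> C" using csr_aut_inj_on[OF aut] CV by (rule inj_on_subset)
  have adj: "csr_adj m (\<psi> u) (\<psi> v) \<longleftrightarrow> csr_adj m u v" if "u \<in> ?V" "v \<in> ?V" for u v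
    using csr_aut_adj[OF aut that] .
  obtain y1 y2 y3 where y: "y1 \<in> C" "y2 \<in> C" "y3 \<in> C" "y1 \<noteq> y2" "y1 \<noteq> y3" "y2 \<noteq> y3"
    using closed_clique_three[OF C] .
  show ?thesis
    unfolding closed_clique_def
  proof (intro conjI)
    show "\<psi> ` C \<subseteq> ?V" using CV csr_aut_image[OF aut] by blast
    show "\<forall>u\<in>\<psi> ` C. \<forall>v\<in>\<psi> ` C. u \<noteq> v \<longrightarrow> csr_adj m u v"
      using closed_clique_adj[OF C] adj CV by blast
    show "\<forall>v\<in>?V. \<forall>z1\<in>\<psi> ` C. \<forall>z2\<in>\<psi> ` C. \<forall>z3\<in>\<psi> ` C. z1 \<noteq> z2 \<and> z1 \<noteq> z3 \<and> z2 \<noteq> z3 \<and>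
        csr_adj m v z1 \<and> csr_adj m v z2 \<and> csr_adj m v z3 \<longrightarrow> v \<in> \<psi> ` C"
    proof (intro ballI impI)
      fix v z1 z2 z3 assume v: "v \<in> ?V" and z: "z1 \<in> \<psi> ` C" "z2 \<in> \<psi> ` C" "z3 \<in> \<psi> ` C"
        and h: "z1 \<noteq> z2 \<and> z1 \<noteq> z3 \<and> z2 \<noteq> z3 \<and> csr_adj m v z1 \<and> csr_adj m v z2 \<and> csr_adj m v z3"
      obtain u where u: "u \<in> ?V" "v = \<psi> u" using v csr_aut_image[OF aut] by blast
      obtain x1 x2 x3 where x: "x1 \<in> C" "x2 \<in> C" "x3 \<in> C" "z1 = \<psi> x1" "z2 = \<psi> x2" "z3 = \<psi> x3"
        using z by blast
      have "u \<in> C"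
        using closed_clique_common_neighbour[OF C u(1) x(1-3)] h x u adj CV by blast
      then show "v \<in> \<psi> ` C" using u by blast
    qed
    show "\<exists>z1\<in>\<psi> ` C. \<exists>z2\<in>\<psi> ` C. \<exists>z3\<in>\<psi> ` C. z1 \<noteq> z2 \<and> z1 \<noteq> z3 \<and> z2 \<noteq> z3"
    proof -
      have "\<psi> y1 \<noteq> \<psi> y2" "\<psi> y1 \<noteq> \<psi> y3" "\<psi> y2 \<noteq> \<psi> y3"
        using y inj by (auto dest: inj_onD)
      then show ?thesis using y by blast
    qed
  qed
qed

lemma card_2_triangle:
  assumes P: "card P = 2" and Q: "card Q = 2" and R: "card R = 2" and PQ: "P \<noteq> Q"
    and PQR: "P - Q \<subseteq> R" and QPR: "Q - P \<subseteq> R"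
  obtains a b c where "a \<noteq> b" "a \<noteq> c" "b \<noteq> c" "P = {a,b}" "Q = {a,c}" "R = {b,c}"
proof -
  have eq_pair: "S = {s,t}" if "card S = 2" "s \<in> S" "t \<in> S" "s \<noteq> t" for S :: "'a set" and s t
  proof -
    have "finite S" using that(1) by (intro card_ge_0_finite) simp
    moreover have "{s,t} \<subseteq> S" "card {s,t} = card S" using that by auto
    ultimately show ?thesis using card_subset_eq[of S "{s,t}"] by simp
  qed
  have "finite P" "finite Q" using P Q by (auto intro: card_ge_0_finite)
  then have "\<not> P \<subseteq> Q" "\<not> Q \<subseteq> P"
    using P Q PQ card_subset_eq[of Q P] card_subset_eq[of P Q] by auto
  then obtain b c where b: "b \<in> P" "b \<notin> Q" and c: "c \<in> Q" "c \<notin> P" by blast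
  have "b \<noteq> c" using b c by blast
  then have Rbc: "R = {b,c}" using eq_pair[OF R] b c PQR QPR by blast
  obtain a where "P = {a,b}" "a \<noteq> b" using P b(1) unfolding card_2_iff by blast
  moreover have "a \<in> Q" using calculation Rbc c(2) PQR by blast
  moreover have "Q = {a,c}" using eq_pair[OF Q \<open>a \<in> Q\<close> c(1)] calculation(1) c(2) by blast
  ultimately show ?thesis using b c Rbc \<open>b \<noteq> c\<close> by (intro that[of a b c]) auto
qed

lemma csr_adj_triangle:
  assumes xy: "csr_adj m x y" and xz: "csr_adj m x z" and yz: "csr_adj m y z"
    and ne: "diff_coords m x y \<noteq> diff_coords m x z"
  obtains a b c where "a \<noteq> b" "a \<noteq> c" "b \<noteq> c" "diff_coords m x y = {a,b}" "diff_coords m x z = {a,c}"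
    "y a = z a"
proof -
  obtain a b c where abc: "a \<noteq> b" "a \<noteq> c" "b \<noteq> c" "diff_coords m x y = {a,b}" "diff_coords m x z = {a,c}"
    "diff_coords m y z = {b,c}"
    using card_2_triangle[OF xy[unfolded csr_adj_iff_card_diff_coords] xz[unfolded csr_adj_iff_card_diff_coords]
        yz[unfolded csr_adj_iff_card_diff_coords] ne diff_coords_Diff_subset]
      diff_coords_Diff_subset[of m x z y] diff_coords_commute[of m z y]
    by metis
  moreover have "a \<in> {1..m}" using abc(4) diff_coords_subset by blast
  ultimately have "y a = z a" by (auto simp: diff_coords_def)
  with abc that show ?thesis by blast
qed

lemma csr_adj_upd_comp:
  assumes x: "x \<in> csr_verts m n" and y: "y \<in> csr_verts m n" and dxy: "diff_coords m x y = {a,b}"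
    and ab: "a \<noteq> b" and d: "d \<in> {1..m}" "d \<noteq> a" "d \<noteq> b"
  shows "csr_adj m y (upd_comp n x a (y a) d)"
proof -
  let ?w = "upd_comp n x a (y a) d"
  have a: "a \<in> {1..m}" using dxy diff_coords_subset by blast
  have wV: "?w \<in> csr_verts m n"
    using upd_comp_in_csr_verts[OF x a d(1) d(2)[symmetric]] csr_verts_range[OF y a] by blast
  have agree: "x i = y i" if "i \<noteq> a" "i \<noteq> b" for i
    using that dxy csr_verts_in_diff_coords_iff[OF x y, of i] by blast
  have "x b \<noteq> y b" using dxy csr_verts_in_diff_coords_iff[OF x y, of b] by blast
  then have "y \<noteq> ?w" using ab d(3) by (auto dest!: fun_cong[where x = b] simp: upd_comp_def)
  moreover have "diff_coords m y ?w \<subseteq> {b,d}"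
    using agree by (auto simp: diff_coords_def upd_comp_def)
  ultimately have "diff_coords m y ?w = {b,d}"
    using diff_coords_eq_pair[OF y wV] d(3) by metis
  then show ?thesis using d(3) by (simp add: csr_adj_iff_card_diff_coords)
qed

definition csr_star :: "nat \<Rightarrow> (nat \<Rightarrow> int) \<Rightarrow> nat \<Rightarrow> (nat \<Rightarrow> int) set \<Rightarrow> bool" where
  "csr_star m x a C \<longleftrightarrow> (\<forall>d\<in>{1..m}. d \<noteq> a \<longrightarrow> (\<exists>y\<in>C. diff_coords m x y = {a,d}))"

lemma closed_clique_csr_star:
  assumes C: "closed_clique m n C" and x: "x \<in> C" and y: "y1 \<in> C" "y2 \<in> C" "y1 \<noteq> x" "y2 \<noteq> x"
    and ne: "diff_coords m x y1 \<noteq> diff_coords m x y2"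
  shows "\<exists>a\<in>{1..m}. csr_star m x a C"
proof -
  have V: "x \<in> csr_verts m n" "y1 \<in> csr_verts m n" "y2 \<in> csr_verts m n"
    using closed_clique_subset[OF C] x y by blast+
  have "y1 \<noteq> y2" using ne by blast
  then have adj: "csr_adj m x y1" "csr_adj m x y2" "csr_adj m y1 y2"
    using closed_clique_adj[OF C] x y by metis+
  obtain a b c where abc: "a \<noteq> b" "a \<noteq> c" "b \<noteq> c" "diff_coords m x y1 = {a,b}"
    "diff_coords m x y2 = {a,c}" "y1 a = y2 a"
    using csr_adj_triangle[OF adj ne] .
  have "csr_star m x a C"
    unfolding csr_star_def
  proof (intro ballI impI)
    fix d assume d: "d \<in> {1..m}" "d \<noteq> a"
    show "\<exists>y\<in>C. diff_coords m x y = {a,d}"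
    proof (cases "d = b \<or> d = c")
      case True
      then show ?thesis using abc y by blast
    next
      case False
      let ?w = "upd_comp n x a (y1 a) d"
      have "csr_adj m y1 ?w" "csr_adj m y2 ?w"
        using csr_adj_upd_comp[OF V(1,2) abc(4,1) d] csr_adj_upd_comp[OF V(1,3) abc(5,2) d] False abc(6)
        by auto
      moreover have a: "a \<in> {1..m}" using abc(4) diff_coords_subset by blast
      moreover have "y1 a \<noteq> x a"
        using abc(4) csr_verts_in_diff_coords_iff[OF V(1,2), of a] by auto
      ultimately have "?w \<in> csr_verts m n" "diff_coords m x ?w = {a,d}" "csr_adj m y1 ?w" "csr_adj m y2 ?w"
        using upd_comp_in_csr_verts[OF V(1) a d(1) d(2)[symmetric]]
          diff_coords_upd_comp[OF V(1) a d(1) d(2)[symmetric]] csr_verts_range[OF V(2) a] by auto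
      moreover have "csr_adj m x ?w"
        using calculation(2) d(2) by (simp add: csr_adj_iff_card_diff_coords)
      ultimately have "?w \<in> C"
        using closed_clique_common_neighbour[OF C _ x y(1,2)] y \<open>y1 \<noteq> y2\<close> csr_adj_commute by metis
      then show ?thesis using \<open>diff_coords m x ?w = {a,d}\<close> by blast
    qed
  qed
  moreover have "a \<in> {1..m}" using abc(4) diff_coords_subset by blast
  ultimately show ?thesis by blast
qed

lemma closed_clique_csr_line_or_star:
  assumes C: "closed_clique m n C" and x: "x \<in> C"
  shows "(\<exists>p\<in>{1..m}. \<exists>q\<in>{1..m}. p \<noteq> q \<and> C = csr_line m n x p q) \<or> (\<exists>a\<in>{1..m}. csr_star m x a C)"
proof (cases "\<exists>y1\<in>C. \<exists>y2\<in>C. y1 \<noteq> x \<and> y2 \<noteq> x \<and> diff_coords m x y1 \<noteq> diff_coords m x y2")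
  case True
  then show ?thesis using closed_clique_csr_star[OF C x] by blast
next
  case False
  obtain y0 where y0: "y0 \<in> C" "y0 \<noteq> x"
    using closed_clique_three[OF C] by metis
  then have "card (diff_coords m x y0) = 2"
    using closed_clique_adj[OF C x] by (simp add: csr_adj_iff_card_diff_coords)
  then obtain p q where pq: "diff_coords m x y0 = {p,q}" "p \<noteq> q" unfolding card_2_iff by blast
  have "C \<subseteq> csr_line m n x p q"
  proof
    fix y assume y: "y \<in> C"
    then have "diff_coords m x y \<subseteq> {p,q}" using False y0 pq by (cases "y = x") auto
    then show "y \<in> csr_line m n x p q" using y closed_clique_subset[OF C] by (auto simp: csr_line_def)
  qed
  then have "C = csr_line m n x p q" by (rule closed_clique_subset_csr_line_eq[OF C pq(2)])
  moreover have "p \<in> {1..m}" "q \<in> {1..m}" using pq(1) diff_coords_subset by blast+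
  ultimately show ?thesis using pq(2) by blast
qed

definition separated_at :: "nat \<Rightarrow> (nat \<Rightarrow> int) \<Rightarrow> (nat \<Rightarrow> int) set \<Rightarrow> (nat \<Rightarrow> int) set \<Rightarrow> bool" where
  "separated_at m x C K \<longleftrightarrow> C \<inter> K \<subseteq> {x} \<and> (\<forall>u\<in>C. \<forall>w\<in>K. u \<noteq> x \<longrightarrow> w \<noteq> x \<longrightarrow> \<not> csr_adj m u w)"

lemma separated_at_no_common_line:
  assumes sep: "separated_at m x C K" and x: "x \<in> csr_verts m n"
    and y: "y \<in> C" "y \<in> csr_verts m n" "diff_coords m x y = {p,q}"
    and z: "z \<in> K" "z \<in> csr_verts m n" "diff_coords m x z = {p,q}" and pq: "p \<noteq> q"
  shows False
proof -
  have "y \<noteq> x" "z \<noteq> x" using y(3) z(3) by auto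
  show False
  proof (cases "y = z")
    case True
    then show False using sep y(1) z(1) \<open>y \<noteq> x\<close> by (auto simp: separated_at_def)
  next
    case False
    have "y \<in> csr_line m n x p q" "z \<in> csr_line m n x p q" using y z by (auto simp: csr_line_def)
    then have "csr_adj m y z" using csr_line_adj False pq by blast
    then show False using sep y(1) z(1) \<open>y \<noteq> x\<close> \<open>z \<noteq> x\<close> by (auto simp: separated_at_def)
  qed
qed

lemma csr_star_not_separated_from_line:
  assumes C: "closed_clique m n C" and x: "x \<in> csr_verts m n" and sep: "separated_at m x C (csr_line m n x p q)"
    and pq: "p \<in> {1..m}" "q \<in> {1..m}" "p \<noteq> q" and a: "a \<in> {1..m}" and star: "csr_star m x a C"
  shows False
proof (cases "a \<in> {p,q}")
  case True
  define d where "d = (if a = p then q else p)"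
  have d: "d \<in> {1..m}" "d \<noteq> a" "{a,d} = {p,q}" using True pq by (auto simp: d_def)
  then obtain y where y: "y \<in> C" "diff_coords m x y = {p,q}"
    using star unfolding csr_star_def by metis
  have yV: "y \<in> csr_verts m n" using y(1) closed_clique_subset[OF C] by blast
  then have "y \<in> csr_line m n x p q" using y(2) by (simp add: csr_line_def)
  then show False by (rule separated_at_no_common_line[OF sep x y(1) yV y(2) _ yV y(2) pq(3)])
next
  case False
  then have "p \<noteq> a" by simp
  then obtain y where y: "y \<in> C" "diff_coords m x y = {a,p}"
    using star pq(1) unfolding csr_star_def by blast
  have yV: "y \<in> csr_verts m n" using y(1) closed_clique_subset[OF C] by blast
  have dxy: "diff_coords m x y = {p,a}" using y(2) by (simp add: insert_commute)
  let ?w = "upd_comp n x p (y p) q"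
  have "y p \<noteq> x p" using dxy csr_verts_in_diff_coords_iff[OF x yV, of p] by auto
  then have "diff_coords m x ?w = {p,q}"
    using diff_coords_upd_comp[OF x pq] csr_verts_range[OF yV pq(1)] by auto
  moreover have "?w \<in> csr_verts m n"
    using upd_comp_in_csr_verts[OF x pq] csr_verts_range[OF yV pq(1)] by auto
  ultimately have "?w \<in> csr_line m n x p q" "?w \<noteq> x" by (auto simp: csr_line_def)
  moreover have "csr_adj m y ?w" using csr_adj_upd_comp[OF x yV dxy] False pq by auto
  moreover have "y \<noteq> x" using y(2) by auto
  ultimately show False using sep y(1) unfolding separated_at_def by blast
qed

lemma csr_star_not_separated_from_star:
  assumes C: "closed_clique m n C" and K: "closed_clique m n K" and x: "x \<in> csr_verts m n"
    and sep: "separated_at m x C K" and a: "a \<in> {1..m}" "csr_star m x a C"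
    and a': "a' \<in> {1..m}" "csr_star m x a' K" and m: "2 \<le> m"
  shows False
proof -
  have "\<exists>e\<in>{1..m}. e \<noteq> a \<and> (\<exists>z\<in>K. diff_coords m x z = {a,e})"
  proof (cases "a' = a")
    case True
    define e :: nat where "e = (if a = 1 then 2 else 1)"
    have "e \<in> {1..m}" "e \<noteq> a" using m by (auto simp: e_def)
    then show ?thesis using a'(2) True unfolding csr_star_def by blast
  next
    case False
    then have "a \<noteq> a'" by simp
    then obtain z where "z \<in> K" "diff_coords m x z = {a',a}"
      using a'(2) a(1) unfolding csr_star_def by blast
    then show ?thesis using False a'(1) by (intro bexI[of _ a']) (auto simp: insert_commute)
  qed
  then obtain e z where e: "e \<in> {1..m}" "e \<noteq> a" and z: "z \<in> K" "diff_coords m x z = {a,e}"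
    by blast
  obtain y where y: "y \<in> C" "diff_coords m x y = {a,e}" using a(2) e unfolding csr_star_def by blast
  have "y \<in> csr_verts m n" "z \<in> csr_verts m n"
    using y(1) z(1) closed_clique_subset[OF C] closed_clique_subset[OF K] by blast+
  then show False
    using separated_at_no_common_line[OF sep x y(1) _ y(2) z(1) _ z(2)] e(2) by blast
qed

lemma closed_clique_separated_eq_csr_line:
  assumes C: "closed_clique m n C" and K: "closed_clique m n K" and x: "x \<in> C" "x \<in> K"
    and sep: "separated_at m x C K" and m: "2 \<le> m"
  shows "\<exists>p\<in>{1..m}. \<exists>q\<in>{1..m}. p \<noteq> q \<and> C = csr_line m n x p q"
proof -
  have xV: "x \<in> csr_verts m n" using x(1) closed_clique_subset[OF C] by blast
  have "\<not> csr_star m x a C" if a: "a \<in> {1..m}" for a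
  proof
    assume star: "csr_star m x a C"
    from closed_clique_csr_line_or_star[OF K x(2)] show False
    proof (elim disjE bexE conjE)
      fix p q assume pq: "p \<in> {1..m}" "q \<in> {1..m}" "p \<noteq> q" and K_eq: "K = csr_line m n x p q"
      have "separated_at m x C (csr_line m n x p q)" using sep K_eq by simp
      then show False by (rule csr_star_not_separated_from_line[OF C xV _ pq a star])
    next
      fix a' assume "a' \<in> {1..m}" "csr_star m x a' K"
      then show False by (rule csr_star_not_separated_from_star[OF C K xV sep a star _ _ m])
    qed
  qed
  then show ?thesis using closed_clique_csr_line_or_star[OF C x(1)] by blast
qed

lemma csr_lines_separated_at:
  assumes x: "x \<in> csr_verts m n" and ab: "a \<noteq> b" and cd: "c \<noteq> d" and disj: "{a,b} \<inter> {c,d} = {}"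
  shows "separated_at m x (csr_line m n x a b) (csr_line m n x c d)"
  unfolding separated_at_def
proof (intro conjI ballI impI)
  show "csr_line m n x a b \<inter> csr_line m n x c d \<subseteq> {x}"
  proof
    fix y assume "y \<in> csr_line m n x a b \<inter> csr_line m n x c d"
    then have "y \<in> csr_verts m n" "diff_coords m x y = {}" using disj by (auto simp: csr_line_def)
    then show "y \<in> {x}" using csr_verts_eqI[OF x] by blast
  qed
next
  fix u w assume u: "u \<in> csr_line m n x a b" "u \<noteq> x" and w: "w \<in> csr_line m n x c d" "w \<noteq> x"
  have "diff_coords m x u = {a,b}" "diff_coords m x w = {c,d}"
    using diff_coords_csr_line[OF self_in_csr_line[OF x] u(1)] diff_coords_csr_line[OF self_in_csr_line[OF x] w(1)]
      u(2) w(2) ab cd by auto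
  then have "{a,b} \<union> {c,d} \<subseteq> diff_coords m u w"
    using diff_coords_Diff_subset[of m x u w] diff_coords_Diff_subset[of m x w u] diff_coords_commute[of m w u]
      disj by auto
  then have "card ({a,b} \<union> {c,d}) \<le> card (diff_coords m u w)"
    by (intro card_mono) (auto intro: finite_subset[OF diff_coords_subset])
  moreover have "card ({a,b} \<union> {c,d}) = 4" using ab cd disj by (auto simp: card_insert_if)
  ultimately show "\<not> csr_adj m u w" by (simp add: csr_adj_iff_card_diff_coords)
qed

lemma separated_at_image:
  assumes aut: "csr_aut m n \<psi>" and CK: "C \<subseteq> csr_verts m n" "K \<subseteq> csr_verts m n" and x: "x \<in> C"
    and sep: "separated_at m x C K"
  shows "separated_at m (\<psi> x) (\<psi> ` C) (\<psi> ` K)"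
proof -
  have "inj_on \<psi> (C \<union> K)" using csr_aut_inj_on[OF aut] CK by (auto intro: inj_on_subset)
  then have "\<psi> ` C \<inter> \<psi> ` K = \<psi> ` (C \<inter> K)" by (simp add: inj_on_image_Int)
  then have "\<psi> ` C \<inter> \<psi> ` K \<subseteq> {\<psi> x}" using sep by (auto simp: separated_at_def)
  moreover have "\<not> csr_adj m u w"
    if uw: "u \<in> \<psi> ` C" "w \<in> \<psi> ` K" "u \<noteq> \<psi> x" "w \<noteq> \<psi> x" for u w
  proof -
    obtain u0 w0 where "u0 \<in> C" "w0 \<in> K" "u = \<psi> u0" "w = \<psi> w0" "u0 \<noteq> x" "w0 \<noteq> x"
      using uw by blast
    moreover from this have "\<not> csr_adj m u0 w0" using sep by (auto simp: separated_at_def)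
    ultimately show ?thesis using csr_aut_adj[OF aut] CK by blast
  qed
  ultimately show ?thesis unfolding separated_at_def by blast
qed

lemma two_coords_avoiding:
  fixes m a b :: nat
  assumes "4 \<le> m"
  obtains c d where "c \<in> {1..m}" "d \<in> {1..m}" "c \<noteq> d" "{a,b} \<inter> {c,d} = {}"
proof -
  let ?S = "{1..m} - {a,b}"
  have "card {1..m} - card {a,b} \<le> card ?S" by (rule diff_card_le_card_Diff) simp
  moreover have "card {a,b} \<le> 2" by (simp add: card_insert_le_m1)
  ultimately have "Suc (Suc 0) \<le> card ?S" using assms by simp
  then obtain c B where "?S = insert c B" "c \<notin> B" "Suc 0 \<le> card B" by (auto simp: card_le_Suc_iff)
  moreover from this obtain d where "d \<in> B" by (auto simp: card_le_Suc_iff)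
  ultimately show ?thesis using that[of c d] by blast
qed

theorem lemma3:
  fixes m n :: nat and \<psi> :: "(nat \<Rightarrow> int) \<Rightarrow> (nat \<Rightarrow> int)"
  assumes "n > 3" and "m > 3" and "csr_aut m n \<psi>"
    and "\<xi> \<in> csr_verts m n" and "a \<in> {1..m}" and "b \<in> {1..m}" and "a \<noteq> b"
  shows "\<exists>\<sigma>\<in>csr_verts m n. \<exists>p\<in>{1..m}. \<exists>q\<in>{1..m}. p \<noteq> q \<and>
           \<psi> ` vtrans n \<xi> (S_line n a b) = vtrans n \<sigma> (S_line n p q)"
proof -
  note n = assms(1) and aut = assms(3) and \<xi> = assms(4) and ab = assms(5-7)
  have "4 \<le> m" using assms(2) by simp
  then obtain c d where cd: "c \<in> {1..m}" "d \<in> {1..m}" "c \<noteq> d" "{a,b} \<inter> {c,d} = {}"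
    by (rule two_coords_avoiding)
  let ?L = "csr_line m n \<xi> a b" and ?K = "csr_line m n \<xi> c d"
  have L: "closed_clique m n ?L" and K: "closed_clique m n ?K"
    using closed_clique_csr_line[OF \<xi> ab] closed_clique_csr_line[OF \<xi> cd(1-3)] n by auto
  have \<xi>_in: "\<psi> \<xi> \<in> \<psi> ` ?L" "\<psi> \<xi> \<in> \<psi> ` ?K" using self_in_csr_line[OF \<xi>] by blast+
  have "separated_at m (\<psi> \<xi>) (\<psi> ` ?L) (\<psi> ` ?K)"
    using separated_at_image[OF aut closed_clique_subset[OF L] closed_clique_subset[OF K]]
      csr_lines_separated_at[OF \<xi> ab(3) cd(3,4)] self_in_csr_line[OF \<xi>] by blast
  then obtain p q where pq: "p \<in> {1..m}" "q \<in> {1..m}" "p \<noteq> q" "\<psi> ` ?L = csr_line m n (\<psi> \<xi>) p q"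
    using closed_clique_separated_eq_csr_line[OF closed_clique_image[OF aut L] closed_clique_image[OF aut K] \<xi>_in]
      assms(2) by auto
  have \<psi>\<xi>: "\<psi> \<xi> \<in> csr_verts m n" using csr_aut_image[OF aut] \<xi> by blast
  have "\<psi> ` vtrans n \<xi> (S_line n a b) = vtrans n (\<psi> \<xi>) (S_line n p q)"
    using vtrans_S_line[OF \<xi> ab] vtrans_S_line[OF \<psi>\<xi> pq(1-3)] pq(4) n by simp
  then show ?thesis using \<psi>\<xi> pq(1-3) by blast
qed

end
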